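(* Assume the environments are defined by a class of linear spurious correlation latent SCMs $\mathcal{M}_\mathcal{E}$ and let $e^+$ be any test domain with $\mathcal{M}_{e^+}\in\mathcal{M}_\mathcal{E}$. Then for empirical risk minimization (i.e., with no constraint on $\theta\in\mathbb{R}^d$) in logistic regression, $$\mathbb{E}_{({\mathbf{x}}_{e^+},{\textnormal{y}}_{e^+})\sim\mathbb{P}_{\mathrm{test}}}[\ell_{\mathrm{LL}}(\theta^\top{\mathbf{x}}_{e^+},{\textnormal{y}}_{e^+})]\le\mathbb{E}_{({\mathbf{x}},{\textnormal{y}})\sim\mathbb{P}_{\mathrm{train}}}[\ell_{\mathrm{LL}}(\theta^\top{\mathbf{x}},{\textnormal{y}})]+\|\theta\|\sqrt{\lambda_1(e^+)}.$$
   Context: Setting. $\mathcal{E}$ is a set of domains; each domain $e$ has an SCM sharing exogenous noise ${\mathbf{u}}\sim\mathbb{P}_\mathcal{U}$, latent variables ${\mathbf{z}}$, observed ${\mathbf{x}}\in\mathbb{R}^d$ and target ${\textnormal{y}}\in\{-1,1\}$. Latent mechanisms $f_{e,i}$ may depend on $e$ (solution map $f_e:{\bm{u}}\mapsto{\bm{z}}$); the observed mechanisms are shared: ${\mathbf{x}}_e=g_{\mathbf{x}}(f_e({\mathbf{u}}))$ with $g_{\mathbf{x}}$ linear, and ${\textnormal{y}}$ is the sign of a linear function of ${\mathbf{z}}$; the SCMs are linear. The intervention set $\mathcal{I}(\mathcal{F}_\mathcal{E})=\{i:f_{e,i}\neq f_{e',i}\text{ for some }e,e'\}$ contains no ancestor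 of ${\textnormal{y}}$ (spurious correlation assumption). Training domains $\mathcal{E}_{\mathrm{train}}\subseteq\mathcal{E}$ have weights $\mathbb{P}(e)$ and $\mathbb{P}_{\mathrm{train}}=\sum_e\mathbb{P}(e)\mathbb{P}_e$; $\mathbb{P}_{\mathrm{test}}$ is the distribution of domain $e^+$. With the same ${\mathbf{u}}$, ${\mathbf{x}}_{e^+}=g_{\mathbf{x}}(f_{e^+}({\mathbf{u}}))$ and ${\mathbf{x}}_{e^+\to e}=g_{\mathbf{x}}(f_e({\mathbf{u}}))$. $\lambda_1(e^+)$ is the largest eigenvalue of $M_{e^+}:=\sum_{e\in\mathcal{E}_{\mathrm{train}}}\mathbb{P}(e)\mathbb{E}_{\mathbf{u}}[({\mathbf{x}}_{e^+}-{\mathbf{x}}_{e^+\to e})({\mathbf{x}}_{e^+}-{\mathbf{x}}_{e^+\to e})^\top]$. $\ell_{\mathrm{LL}}(t,y)=\log(1+e^{-yt})$ and $\|\cdot\|$ is the Euclidean norm. *)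

theory Defs
  imports "HOL-Analysis.Analysis" "HOL-Probability.Probability"
begin

definition ell_LL :: "real \<Rightarrow> real \<Rightarrow> real" where
  "ell_LL t y = ln (1 + exp (- y * t))"

text \<open>Linear latent SCM of domain e: z = B e z + C e u (B: latent-to-latent weights,
  C: noise weights). The mechanism of latent variable i in domain e.\<close>
definition mech :: "('e \<Rightarrow> real^'k^'k) \<Rightarrow> ('e \<Rightarrow> real^'m^'k) \<Rightarrow> 'e \<Rightarrow> 'k
    \<Rightarrow> (real^'k \<Rightarrow> real^'m \<Rightarrow> real)" where
  "mech B C e i = (\<lambda>z u. (B e $ i) \<bullet> z + (C e $ i) \<bullet> u)"

definition acyclic_lin :: "real^'k^'k \<Rightarrow> bool" where
  "acyclic_lin Bm \<longleftrightarrow> (\<exists>r :: 'k \<Rightarrow> nat. \<forall>i j. Bm $ i $ j \<noteq> 0 \<longrightarrow> r j < r i)"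

text \<open>Solution map f_e : u \<mapsto> z of the linear SCM z = B z + C u.\<close>
definition sol_map :: "real^'k^'k \<Rightarrow> real^'m^'k \<Rightarrow> real^'m \<Rightarrow> real^'k" where
  "sol_map Bm Cm u = (matrix_inv (mat 1 - Bm) ** Cm) *v u"

text \<open>Label: y = sign(w^T z) in {-1,1} (convention: sign 0 = 1).\<close>
definition label :: "real^'k \<Rightarrow> real^'k \<Rightarrow> real" where
  "label w z = (if w \<bullet> z \<ge> 0 then 1 else -1)"

definition is_parent :: "'e set \<Rightarrow> ('e \<Rightarrow> real^'k^'k) \<Rightarrow> 'k \<Rightarrow> 'k \<Rightarrow> bool" where
  "is_parent E B j i \<longleftrightarrow> (\<exists>e\<in>E. B e $ i $ j \<noteq> 0)"

text \<open>Ancestors of the target y (whose parents are the i with w_i \<noteq> 0).\<close>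
inductive anc_y :: "'e set \<Rightarrow> ('e \<Rightarrow> real^'k^'k) \<Rightarrow> real^'k \<Rightarrow> 'k \<Rightarrow> bool"
  for E B w where
  par_y: "w $ i \<noteq> 0 \<Longrightarrow> anc_y E B w i"
| par_anc: "is_parent E B i j \<Longrightarrow> anc_y E B w j \<Longrightarrow> anc_y E B w i"

definition interv_set :: "'e set \<Rightarrow> ('e \<Rightarrow> real^'k^'k) \<Rightarrow> ('e \<Rightarrow> real^'m^'k) \<Rightarrow> 'k set" where
  "interv_set E B C = {i. \<exists>e\<in>E. \<exists>e'\<in>E. mech B C e i \<noteq> mech B C e' i}"

definition lambda_max :: "real^'n^'n \<Rightarrow> real" where
  "lambda_max A = Max {l. \<exists>v. v \<noteq> 0 \<and> A *v v = l *\<^sub>R v}"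

definition M_shift :: "(real^'m) measure \<Rightarrow> 'e set \<Rightarrow> ('e \<Rightarrow> real) \<Rightarrow> real^'k^'d
    \<Rightarrow> ('e \<Rightarrow> real^'k^'k) \<Rightarrow> ('e \<Rightarrow> real^'m^'k) \<Rightarrow> 'e \<Rightarrow> real^'d^'d" where
  "M_shift Mu Etr P G B C ep = (\<chi> a b. \<Sum>e\<in>Etr. P e *
     integral\<^sup>L Mu (\<lambda>u. (G *v sol_map (B ep) (C ep) u - G *v sol_map (B e) (C e) u) $ a
                   * (G *v sol_map (B ep) (C ep) u - G *v sol_map (B e) (C e) u) $ b))"

end

theory Submission
  imports Defs
begin

(* Acyclicity makes mat 1 - B e invertible, so in every domain the latents, the features and
   hence the score theta . x are linear functions of the shared noise u.  No intervened
   mechanism is an ancestor of y, so along the causal order the ancestors of y, and with them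
   the label, take the same value in every domain for the same u.  The logistic loss is
   1-Lipschitz in the score, hence the test risk exceeds the risk of a training domain e by at
   most E |theta . (x_{e+} - x_{e+ -> e})|.  Averaging over the training domains and applying
   Cauchy-Schwarz bounds the excess by sqrt (theta . M_{e+} theta), and the Rayleigh quotient
   of the symmetric matrix M_{e+} is at most its largest eigenvalue. *)

lemma matrix_inv_right:
  fixes A :: "'a::field^'n^'n"
  assumes "invertible A"
  shows "A ** matrix_inv A = mat 1"
  using someI_ex[OF assms[unfolded invertible_def]] unfolding matrix_inv_def by blast

lemma acyclic_lin_induct [consumes 1, case_names parents]:
  fixes Bm :: "real^'k^'k"
  assumes "acyclic_lin Bm"
    and "\<And>i. (\<And>j. Bm $ i $ j \<noteq> 0 \<Longrightarrow> Q j) \<Longrightarrow> Q i"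
  shows "Q i"
proof -
  obtain r :: "'k \<Rightarrow> nat" where r: "\<And>i j. Bm $ i $ j \<noteq> 0 \<Longrightarrow> r j < r i"
    using assms(1) unfolding acyclic_lin_def by blast
  show ?thesis
    by (induction i rule: measure_induct_rule[of r]) (use assms(2) r in blast)
qed

lemma acyclic_lin_invertible:
  fixes Bm :: "real^'k^'k"
  assumes "acyclic_lin Bm"
  shows "invertible (mat 1 - Bm)"
proof -
  have "x = 0" if "(mat 1 - Bm) *v x = 0" for x
  proof -
    have fixed: "x = Bm *v x"
      using that by (simp add: matrix_vector_mult_diff_rdistrib)
    have "x $ i = 0" for i
      using assms
    proof (induction i rule: acyclic_lin_induct)
      case (parents i)
      have "x $ i = (\<Sum>j\<in>UNIV. Bm $ i $ j * x $ j)"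
        by (subst fixed) (simp add: matrix_vector_mult_def)
      also have "\<dots> = 0"
        by (rule sum.neutral) (use parents in force)
      finally show ?case .
    qed
    then show ?thesis by (simp add: vec_eq_iff)
  qed
  then show ?thesis
    unfolding invertible_left_inverse matrix_left_invertible_ker by blast
qed

lemma sol_map_fixed_point:
  fixes Bm :: "real^'k^'k"
  assumes "acyclic_lin Bm"
  shows "sol_map Bm Cm u = Bm *v sol_map Bm Cm u + Cm *v u"
proof -
  have "(mat 1 - Bm) *v sol_map Bm Cm u = Cm *v u"
    unfolding sol_map_def matrix_vector_mul_assoc matrix_mul_assoc
    by (simp add: matrix_inv_right[OF acyclic_lin_invertible[OF assms]])
  then show ?thesis
    by (simp add: matrix_vector_mult_diff_rdistrib algebra_simps)
qed

lemma inner_sol_map: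
  "a \<bullet> (G *v sol_map Bm Cm u) = (a v* (G ** matrix_inv (mat 1 - Bm) ** Cm)) \<bullet> u"
  unfolding sol_map_def dot_lmul_matrix matrix_vector_mul_assoc matrix_mul_assoc ..

lemma mech_eq_imp_rows_eq:
  assumes "mech B C e i = mech B C e' i"
  shows "B e $ i = B e' $ i" and "C e $ i = C e' $ i"
proof -
  have eq: "(B e $ i) \<bullet> z + (C e $ i) \<bullet> v = (B e' $ i) \<bullet> z + (C e' $ i) \<bullet> v" for z v
    using fun_cong[OF fun_cong[OF assms, of z], of v] unfolding mech_def .
  show "B e $ i = B e' $ i"
    by (rule vector_eq_rdot[THEN iffD1]) (use eq[of _ 0] in simp)
  show "C e $ i = C e' $ i"
    by (rule vector_eq_rdot[THEN iffD1]) (use eq[of 0] in simp)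
qed

lemma ancestor_rows_invariant:
  assumes "\<forall>i\<in>interv_set E B C. \<not> anc_y E B w i" and "anc_y E B w i"
    and "e \<in> E" and "e' \<in> E"
  shows "B e $ i = B e' $ i" and "C e $ i = C e' $ i"
proof -
  have "i \<notin> interv_set E B C"
    using assms(1,2) by blast
  then show "B e $ i = B e' $ i" and "C e $ i = C e' $ i"
    using assms(3,4) unfolding interv_set_def by (blast intro: mech_eq_imp_rows_eq)+
qed

lemma sol_map_ancestor_invariant:
  fixes B :: "'e \<Rightarrow> real^'k^'k" and C :: "'e \<Rightarrow> real^'m^'k"
  assumes acyclic: "\<forall>e\<in>E. acyclic_lin (B e)"
    and spurious: "\<forall>i\<in>interv_set E B C. \<not> anc_y E B w i"
    and "e \<in> E" and "e' \<in> E" and "anc_y E B w i"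
  shows "sol_map (B e) (C e) u $ i = sol_map (B e') (C e') u $ i"
proof -
  define z where "z d = sol_map (B d) (C d) u" for d
  have z_i: "z d $ i = (\<Sum>j\<in>UNIV. B d $ i $ j * z d $ j) + C d $ i \<bullet> u" if "d \<in> E" for d i
    using arg_cong[OF sol_map_fixed_point[of "B d" "C d" u], of "\<lambda>x. x $ i"] acyclic that
    by (simp add: z_def matrix_vector_mult_def inner_vec_def)
  have "acyclic_lin (B e')"
    using acyclic \<open>e' \<in> E\<close> by blast
  \<comment> \<open>parents of ancestors are ancestors, and ancestors have the same mechanism in \<open>e\<close> and \<open>e'\<close>\<close>
  then have "anc_y E B w i \<longrightarrow> z e $ i = z e' $ i"
  proof (induction i rule: acyclic_lin_induct)
    case (parents i)
    show ?case
    proof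
      assume anc: "anc_y E B w i"
      have "(\<Sum>j\<in>UNIV. B e' $ i $ j * z e $ j) = (\<Sum>j\<in>UNIV. B e' $ i $ j * z e' $ j)"
      proof (rule sum.cong[OF refl])
        fix j
        show "B e' $ i $ j * z e $ j = B e' $ i $ j * z e' $ j"
        proof (cases "B e' $ i $ j = 0")
          case False
          then have "is_parent E B j i"
            using \<open>e' \<in> E\<close> unfolding is_parent_def by blast
          then have "anc_y E B w j"
            using anc by (rule anc_y.par_anc)
          then show ?thesis using parents False by simp
        qed simp
      qed
      then show "z e $ i = z e' $ i"
        using z_i[of e i] z_i[of e' i] assms(3,4)
          ancestor_rows_invariant[OF spurious anc assms(3,4)] by simp
    qed
  qed
  then show ?thesis using assms(5) unfolding z_def by blast
qed

lemma label_invariant: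
  assumes "\<forall>e\<in>E. acyclic_lin (B e)"
    and "\<forall>i\<in>interv_set E B C. \<not> anc_y E B w i"
    and "e \<in> E" and "e' \<in> E"
  shows "label w (sol_map (B e) (C e) u) = label w (sol_map (B e') (C e') u)"
proof -
  have "w $ i * sol_map (B e) (C e) u $ i = w $ i * sol_map (B e') (C e') u $ i" for i
    using sol_map_ancestor_invariant[OF assms, of i u] anc_y.par_y[of w i E B] by auto
  then have "w \<bullet> sol_map (B e) (C e) u = w \<bullet> sol_map (B e') (C e') u"
    unfolding inner_vec_def by (intro sum.cong) auto
  then show ?thesis
    unfolding label_def by simp
qed

lemma ln_one_plus_exp_le: "ln (1 + exp s) \<le> ln (1 + exp t) + \<bar>s - t\<bar>" for s t :: real
proof (cases "s \<le> t")
  case True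
  then have "ln (1 + exp s) \<le> ln (1 + exp t)"
    by (subst ln_le_cancel_iff) (auto intro: add_pos_pos)
  then show ?thesis by simp
next
  case False
  have shift: "ln (1 + exp x) = x + ln (1 + exp (- x))" for x :: real
  proof -
    have "1 + exp x = exp x * (1 + exp (- x))"
      by (simp add: algebra_simps exp_minus_inverse)
    moreover have "0 < 1 + exp (- x)"
      by (simp add: add_pos_pos)
    ultimately show ?thesis by (simp add: ln_mult)
  qed
  have "ln (1 + exp (- s)) \<le> ln (1 + exp (- t))"
    using False by (subst ln_le_cancel_iff) (auto intro: add_pos_pos)
  then show ?thesis
    using False unfolding shift[of s] shift[of t] by simp
qed

lemma ell_LL_le:
  assumes "\<bar>y\<bar> = 1"
  shows "ell_LL a y \<le> ell_LL b y + \<bar>a - b\<bar>"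
proof -
  have "- y * a - - y * b = (b - a) * y"
    by (simp add: algebra_simps)
  then have "\<bar>- y * a - - y * b\<bar> = \<bar>a - b\<bar>"
    using assms by (simp add: abs_mult abs_minus_commute)
  then show ?thesis
    unfolding ell_LL_def using ln_one_plus_exp_le[of "- y * a" "- y * b"] by simp
qed

lemma ell_LL_nonneg: "0 \<le> ell_LL t y"
  unfolding ell_LL_def by simp

lemma abs_label: "\<bar>label w z\<bar> = 1"
  unfolding label_def by simp

context finite_measure
begin

lemma integrable_ell_LL:
  assumes f: "integrable M f" and y: "y \<in> borel_measurable M" and "\<And>u. \<bar>y u\<bar> = 1"
  shows "integrable M (\<lambda>u. ell_LL (f u) (y u))"
proof (rule Bochner_Integration.integrable_bound)
  show "integrable M (\<lambda>u. ln 2 + \<bar>f u\<bar>)"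
    using f by simp
  show "(\<lambda>u. ell_LL (f u) (y u)) \<in> borel_measurable M"
    using borel_measurable_integrable[OF f] y unfolding ell_LL_def by measurable
  show "AE u in M. norm (ell_LL (f u) (y u)) \<le> norm (ln 2 + \<bar>f u\<bar>)"
  proof (rule AE_I2)
    fix u
    have "ell_LL 0 (y u) = ln 2"
      unfolding ell_LL_def by simp
    then show "norm (ell_LL (f u) (y u)) \<le> norm (ln 2 + \<bar>f u\<bar>)"
      using ell_LL_le[OF \<open>\<bar>y u\<bar> = 1\<close>, of "f u" 0] ell_LL_nonneg[of "f u" "y u"] by simp
  qed
qed

lemma integral_ell_LL_le:
  assumes f: "integrable M f" and g: "integrable M g"
    and y: "y \<in> borel_measurable M" and y_abs: "\<And>u. \<bar>y u\<bar> = 1"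
  shows "(\<integral>u. ell_LL (f u) (y u) \<partial>M)
    \<le> (\<integral>u. ell_LL (g u) (y u) \<partial>M) + (\<integral>u. \<bar>f u - g u\<bar> \<partial>M)"
proof -
  have int_g: "integrable M (\<lambda>u. ell_LL (g u) (y u))" and int_diff: "integrable M (\<lambda>u. \<bar>f u - g u\<bar>)"
    using integrable_ell_LL[OF g y y_abs] f g by auto
  have "(\<integral>u. ell_LL (f u) (y u) \<partial>M) \<le> (\<integral>u. ell_LL (g u) (y u) + \<bar>f u - g u\<bar> \<partial>M)"
    using integrable_ell_LL[OF f y y_abs] int_g int_diff ell_LL_le[OF y_abs]
    by (intro integral_mono) auto
  then show ?thesis
    using int_g int_diff by simp
qed

end

lemma le_convex_combination:
  fixes P b :: "'e \<Rightarrow> real"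
  assumes "\<forall>e\<in>I. 0 \<le> P e" and "(\<Sum>e\<in>I. P e) = 1" and "\<And>e. e \<in> I \<Longrightarrow> a \<le> b e"
  shows "a \<le> (\<Sum>e\<in>I. P e * b e)"
proof -
  have "a = (\<Sum>e\<in>I. P e * a)"
    using assms(2) by (simp flip: sum_distrib_right)
  also have "\<dots> \<le> (\<Sum>e\<in>I. P e * b e)"
    using assms(1,3) by (intro sum_mono mult_left_mono) auto
  finally show ?thesis .
qed

lemma (in prob_space) sum_integral_abs_le_sqrt:
  fixes X :: "'e \<Rightarrow> 'a \<Rightarrow> real"
  assumes "\<forall>e\<in>I. 0 \<le> P e" and "(\<Sum>e\<in>I. P e) = 1"
    and int: "\<And>e. e \<in> I \<Longrightarrow> integrable M (X e)"
    and int_sq: "\<And>e. e \<in> I \<Longrightarrow> integrable M (\<lambda>u. (X e u)\<^sup>2)"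
  shows "(\<Sum>e\<in>I. P e * (\<integral>u. \<bar>X e u\<bar> \<partial>M)) \<le> sqrt (\<Sum>e\<in>I. P e * (\<integral>u. (X e u)\<^sup>2 \<partial>M))"
proof (rule real_le_rsqrt)
  define S where "S = (\<Sum>e\<in>I. P e * (\<integral>u. \<bar>X e u\<bar> \<partial>M))"
  \<comment> \<open>AM-GM \<open>2 S \<bar>x\<bar> - S\<^sup>2 \<le> x\<^sup>2\<close>, integrated and averaged with the weights \<open>P\<close>\<close>
  have "2 * S * (\<integral>u. \<bar>X e u\<bar> \<partial>M) - S\<^sup>2 \<le> (\<integral>u. (X e u)\<^sup>2 \<partial>M)" if "e \<in> I" for e
  proof -
    have "2 * S * (\<integral>u. \<bar>X e u\<bar> \<partial>M) - S\<^sup>2 = (\<integral>u. 2 * S * \<bar>X e u\<bar> - S\<^sup>2 \<partial>M)"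
      using int[OF that] by (simp add: prob_space)
    also have "\<dots> \<le> (\<integral>u. (X e u)\<^sup>2 \<partial>M)"
    proof (rule integral_mono)
      show "2 * S * \<bar>X e u\<bar> - S\<^sup>2 \<le> (X e u)\<^sup>2" for u
        using sum_squares_bound[of S "\<bar>X e u\<bar>"] by simp
    qed (use int[OF that] int_sq[OF that] in auto)
    finally show ?thesis .
  qed
  then have "(\<Sum>e\<in>I. P e * (2 * S * (\<integral>u. \<bar>X e u\<bar> \<partial>M) - S\<^sup>2))
      \<le> (\<Sum>e\<in>I. P e * (\<integral>u. (X e u)\<^sup>2 \<partial>M))"
    using assms(1) by (intro sum_mono mult_left_mono) auto
  moreover have "(\<Sum>e\<in>I. P e * (2 * S * (\<integral>u. \<bar>X e u\<bar> \<partial>M) - S\<^sup>2))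
      = 2 * S * (\<Sum>e\<in>I. P e * (\<integral>u. \<bar>X e u\<bar> \<partial>M)) - S\<^sup>2 * (\<Sum>e\<in>I. P e)"
    by (simp add: right_diff_distrib sum_subtractf sum_distrib_left sum_distrib_right ac_simps)
  then have "(\<Sum>e\<in>I. P e * (2 * S * (\<integral>u. \<bar>X e u\<bar> \<partial>M) - S\<^sup>2)) = S\<^sup>2"
    using assms(2) unfolding S_def[symmetric] by (simp add: power2_eq_square)
  ultimately show "S\<^sup>2 \<le> (\<Sum>e\<in>I. P e * (\<integral>u. (X e u)\<^sup>2 \<partial>M))"
    by simp
qed

lemma symmetric_matrix_inner:
  fixes A :: "real^'n^'n"
  assumes "transpose A = A"
  shows "x \<bullet> (A *v y) = (A *v x) \<bullet> y"
  by (metis assms dot_lmul_matrix transpose_matrix_vector)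

lemma finite_eigenvalues_symmetric:
  fixes A :: "real^'n^'n"
  assumes "transpose A = A"
  shows "finite {l. \<exists>v. v \<noteq> 0 \<and> A *v v = l *\<^sub>R v}"
proof -
  define Ev where "Ev = {l. \<exists>v. v \<noteq> 0 \<and> A *v v = l *\<^sub>R v}"
  define eigvec where "eigvec l = (SOME v. v \<noteq> 0 \<and> A *v v = l *\<^sub>R v)" for l
  have eigvec: "eigvec l \<noteq> 0" "A *v eigvec l = l *\<^sub>R eigvec l" if "l \<in> Ev" for l
    using someI_ex[of "\<lambda>v. v \<noteq> 0 \<and> A *v v = l *\<^sub>R v"] that
    unfolding Ev_def eigvec_def by auto
  have orthogonal: "eigvec l \<bullet> eigvec l' = 0" if "l \<in> Ev" "l' \<in> Ev" "l \<noteq> l'" for l l'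
  proof -
    have "l * (eigvec l \<bullet> eigvec l') = l' * (eigvec l \<bullet> eigvec l')"
      using symmetric_matrix_inner[OF assms, of "eigvec l" "eigvec l'"] eigvec that by simp
    then show ?thesis using that(3) by simp
  qed
  then have inj: "inj_on eigvec Ev"
    using eigvec(1) by (metis inj_onI inner_eq_zero_iff)
  have "card L \<le> CARD('n)" if "L \<subseteq> Ev" "finite L" for L
  proof -
    have "independent (eigvec ` L)"
      using that orthogonal eigvec(1)
      by (intro pairwise_orthogonal_independent) (auto simp: pairwise_def orthogonal_def, metis subsetD)
    then have "card (eigvec ` L) \<le> CARD('n)"
      using independent_bound by fastforce
    then show ?thesis
      using card_image inj_on_subset[OF inj that(1)] by metis
  qed
  then show ?thesis
    unfolding Ev_def[symmetric] using finite_if_finite_subsets_card_bdd by blast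
qed

lemma quadratic_nonneg_imp_linear_coeff_zero:
  fixes a b :: real
  assumes "\<And>t. 0 \<le> t * b + t\<^sup>2 * a"
  shows "b = 0"
proof -
  define c where "c = \<bar>a\<bar> + 1"
  have "c > 0" "a - c < 0" unfolding c_def by auto
  have "0 \<le> (- b / c) * b + (- b / c)\<^sup>2 * a"
    by (rule assms)
  also have "\<dots> = b\<^sup>2 * (a - c) / c\<^sup>2"
    using \<open>c > 0\<close> by (simp add: field_simps power2_eq_square)
  finally have "b\<^sup>2 * (a - c) \<ge> 0"
    using \<open>c > 0\<close> by (simp add: zero_le_divide_iff)
  then show "b = 0"
    using \<open>a - c < 0\<close> by (simp add: zero_le_mult_iff)
qed

lemma psd_isotropic_imp_kernel:
  fixes N :: "real^'n^'n"
  assumes "transpose N = N" and psd: "\<And>x. 0 \<le> x \<bullet> (N *v x)" and "v \<bullet> (N *v v) = 0"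
  shows "N *v v = 0"
proof -
  define d where "d = N *v v"
  have "0 \<le> t * (2 * (d \<bullet> d)) + t\<^sup>2 * (d \<bullet> (N *v d))" for t
    using psd[of "v + t *\<^sub>R d"] assms(3) symmetric_matrix_inner[OF assms(1), of v d]
    by (simp add: d_def matrix_vector_right_distrib inner_add_left inner_add_right
        inner_commute power2_eq_square algebra_simps)
  then have "2 * (d \<bullet> d) = 0"
    by (rule quadratic_nonneg_imp_linear_coeff_zero)
  then show ?thesis
    unfolding d_def by simp
qed

lemma quadratic_form_le_lambda_max:
  fixes A :: "real^'n^'n"
  assumes sym: "transpose A = A"
  shows "x \<bullet> (A *v x) \<le> lambda_max A * (norm x)\<^sup>2"
proof -
  define q where "q y = y \<bullet> (A *v y)" for y :: "real^'n"
  have "continuous_on (sphere 0 1) q"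
    unfolding q_def by (intro continuous_intros linear_continuous_on matrix_vector_mul_linear)
  moreover have "sphere (0 :: real^'n) 1 \<noteq> {}"
    by simp
  ultimately obtain v where v: "v \<in> sphere 0 1" and v_max: "\<And>y. y \<in> sphere 0 1 \<Longrightarrow> q y \<le> q v"
    using continuous_attains_sup[OF compact_sphere] by blast
  define \<mu> where "\<mu> = q v"
  have q_le: "q y \<le> \<mu> * (norm y)\<^sup>2" for y
  proof (cases "y = 0")
    case False
    have "q (y /\<^sub>R norm y) \<le> \<mu>"
      unfolding \<mu>_def using False by (intro v_max) simp
    then show ?thesis
      using False by (simp add: q_def matrix_vector_mult_scaleR field_simps power2_eq_square)
  qed (simp add: q_def)
  \<comment> \<open>\<open>N\<close> is positive semidefinite and vanishes on the maximiser \<open>v\<close>, so \<open>v\<close> is an eigenvector\<close>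
  define N where "N = \<mu> *\<^sub>R mat 1 - A"
  have N_form: "y \<bullet> (N *v y) = \<mu> * (norm y)\<^sup>2 - q y" for y
    by (simp add: N_def q_def matrix_vector_mult_diff_rdistrib inner_diff_right
        power2_norm_eq_inner flip: scaleR_matrix_vector_assoc)
  have "N *v v = 0"
  proof (rule psd_isotropic_imp_kernel)
    show "transpose N = N"
      using sym unfolding N_def transpose_def by (simp add: vec_eq_iff mat_def)
    show "0 \<le> y \<bullet> (N *v y)" for y
      using q_le[of y] N_form[of y] by simp
    show "v \<bullet> (N *v v) = 0"
      using v N_form[of v] by (simp add: \<mu>_def)
  qed
  then have "A *v v = \<mu> *\<^sub>R v"
    by (simp add: N_def matrix_vector_mult_diff_rdistrib flip: scaleR_matrix_vector_assoc)
  moreover have "v \<noteq> 0"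
    using v by auto
  ultimately have "\<mu> \<le> lambda_max A"
    unfolding lambda_max_def using finite_eigenvalues_symmetric[OF sym] by (intro Max_ge) auto
  then have "\<mu> * (norm x)\<^sup>2 \<le> lambda_max A * (norm x)\<^sup>2"
    by (simp add: mult_right_mono)
  then show ?thesis
    using q_le[of x] unfolding q_def by linarith
qed

lemma M_shift_symmetric: "transpose (M_shift M I P G B C ep) = M_shift M I P G B C ep"
  unfolding M_shift_def transpose_def by (simp add: vec_eq_iff mult.commute)

lemma inner_second_moment_matrix:
  fixes D :: "'e \<Rightarrow> 'a \<Rightarrow> real^'d"
  assumes "finite I" and int: "\<And>e a b. e \<in> I \<Longrightarrow> integrable M (\<lambda>u. D e u $ a * D e u $ b)"
  shows "\<theta> \<bullet> ((\<chi> a b. \<Sum>e\<in>I. P e * (\<integral>u. D e u $ a * D e u $ b \<partial>M)) *v \<theta>)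
    = (\<Sum>e\<in>I. P e * (\<integral>u. (\<theta> \<bullet> D e u)\<^sup>2 \<partial>M))"
proof -
  define J where "J e a b = (\<integral>u. D e u $ a * D e u $ b \<partial>M)" for e a b
  have "(\<integral>u. (\<theta> \<bullet> D e u)\<^sup>2 \<partial>M) = (\<Sum>a\<in>UNIV. \<Sum>b\<in>UNIV. \<theta> $ a * \<theta> $ b * J e a b)"
    if "e \<in> I" for e
  proof -
    have "(\<theta> \<bullet> D e u)\<^sup>2 = (\<Sum>a\<in>UNIV. \<Sum>b\<in>UNIV. \<theta> $ a * \<theta> $ b * (D e u $ a * D e u $ b))" for u
      by (simp add: inner_vec_def power2_eq_square sum_product ac_simps)
    then show ?thesis
      using int[OF that] by (simp add: J_def)
  qed
  then have "(\<Sum>e\<in>I. P e * (\<integral>u. (\<theta> \<bullet> D e u)\<^sup>2 \<partial>M))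
      = (\<Sum>e\<in>I. \<Sum>a\<in>UNIV. \<Sum>b\<in>UNIV. \<theta> $ a * \<theta> $ b * (P e * J e a b))"
    by (simp add: sum_distrib_left ac_simps)
  also have "\<dots> = (\<Sum>a\<in>UNIV. \<Sum>b\<in>UNIV. \<theta> $ a * \<theta> $ b * (\<Sum>e\<in>I. P e * J e a b))"
    by (simp add: sum_distrib_left sum.swap[of _ I])
  also have "\<dots> = \<theta> \<bullet> ((\<chi> a b. \<Sum>e\<in>I. P e * J e a b) *v \<theta>)"
    by (simp add: inner_vec_def matrix_vector_mult_def sum_distrib_left ac_simps)
  finally show ?thesis
    unfolding J_def ..
qed

locale square_integrable_noise = prob_space M for M :: "(real^'m) measure" +
  assumes sets_eq_borel [measurable_cong]: "sets M = sets borel"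
    and integrable_coordinate_square: "\<And>l. integrable M (\<lambda>u. (u $ l)\<^sup>2)"
begin

lemma integrable_coordinate_mult: "integrable M (\<lambda>u. u $ l * u $ l')"
proof (rule Bochner_Integration.integrable_bound)
  show "integrable M (\<lambda>u. (u $ l)\<^sup>2 + (u $ l')\<^sup>2)"
    using integrable_coordinate_square by simp
  show "(\<lambda>u. u $ l * u $ l') \<in> borel_measurable M"
    by measurable
  have "\<bar>x * y\<bar> \<le> x\<^sup>2 + y\<^sup>2" for x y :: real
  proof -
    have "0 \<le> \<bar>x\<bar> * \<bar>y\<bar>" and "2 * \<bar>x\<bar> * \<bar>y\<bar> \<le> x\<^sup>2 + y\<^sup>2"
      using sum_squares_bound[of "\<bar>x\<bar>" "\<bar>y\<bar>"] by simp_all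
    then show ?thesis
      unfolding abs_mult by linarith
  qed
  then show "AE u in M. norm (u $ l * u $ l') \<le> norm ((u $ l)\<^sup>2 + (u $ l')\<^sup>2)"
    by simp
qed

lemma integrable_inner_mult: "integrable M (\<lambda>u. (a \<bullet> u) * (b \<bullet> u))"
proof -
  have "(a \<bullet> u) * (b \<bullet> u) = (\<Sum>l\<in>UNIV. \<Sum>l'\<in>UNIV. (a $ l * b $ l') * (u $ l * u $ l'))" for u
    unfolding inner_vec_def sum_product by (simp add: ac_simps)
  then show ?thesis
    using integrable_coordinate_mult by simp
qed

lemma integrable_inner: "integrable M (\<lambda>u. a \<bullet> u)"
  by (rule square_integrable_imp_integrable)
    (use integrable_inner_mult[of a a] in \<open>simp_all add: power2_eq_square\<close>)

lemma inner_M_shift: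
  assumes "finite I"
  shows "\<theta> \<bullet> (M_shift M I P G B C ep *v \<theta>) = (\<Sum>e\<in>I. P e *
    (\<integral>u. (\<theta> \<bullet> (G *v sol_map (B ep) (C ep) u) - \<theta> \<bullet> (G *v sol_map (B e) (C e) u))\<^sup>2 \<partial>M))"
proof -
  define D where "D e u = G *v sol_map (B ep) (C ep) u - G *v sol_map (B e) (C e) u" for e u
  define A where "A e = G ** matrix_inv (mat 1 - B e) ** C e" for e
  have "D e u $ a = (A ep - A e) $ a \<bullet> u" for e u a
    by (simp add: D_def A_def sol_map_def matrix_vector_mul_assoc matrix_mul_assoc
        matrix_vector_mul_component inner_diff_left)
  then have int: "integrable M (\<lambda>u. D e u $ a * D e u $ b)" for e a b
    by (simp add: integrable_inner_mult)
  show ?thesis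
    using inner_second_moment_matrix[OF assms int, of \<theta> P]
    unfolding M_shift_def D_def by (simp add: inner_diff_right)
qed

lemma borel_measurable_label_sol_map: "(\<lambda>u. label w (sol_map Bm Cm u)) \<in> borel_measurable M"
proof -
  have "w \<bullet> sol_map Bm Cm u = (w v* (matrix_inv (mat 1 - Bm) ** Cm)) \<bullet> u" for u
    by (simp add: sol_map_def dot_lmul_matrix)
  then show ?thesis
    unfolding label_def by simp
qed

end

theorem corollary1:
  fixes Mu :: "(real^'m) measure"
    and E Etr :: "'e set" and P :: "'e \<Rightarrow> real"
    and B :: "'e \<Rightarrow> real^'k^'k" and C :: "'e \<Rightarrow> real^'m^'k"
    and G :: "real^'k^'d" and w :: "real^'k"
    and ep :: 'e and \<theta> :: "real^'d"
  assumes "prob_space Mu" and "sets Mu = sets borel"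
    and "\<forall>l. integrable Mu (\<lambda>u. (u $ l)\<^sup>2)"
    and "\<forall>e\<in>E. acyclic_lin (B e)"
    and "\<forall>i\<in>interv_set E B C. \<not> anc_y E B w i"
    and "Etr \<subseteq> E" and "finite Etr"
    and "\<forall>e\<in>Etr. P e \<ge> 0" and "(\<Sum>e\<in>Etr. P e) = 1"
    and "ep \<in> E"
  shows "integral\<^sup>L Mu (\<lambda>u. ell_LL (\<theta> \<bullet> (G *v sol_map (B ep) (C ep) u))
                                   (label w (sol_map (B ep) (C ep) u)))
         \<le> (\<Sum>e\<in>Etr. P e * integral\<^sup>L Mu (\<lambda>u. ell_LL (\<theta> \<bullet> (G *v sol_map (B e) (C e) u))
                                   (label w (sol_map (B e) (C e) u))))
           + norm \<theta> * sqrt (lambda_max (M_shift Mu Etr P G B C ep))"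
proof -
  interpret square_integrable_noise Mu
    using assms(1-3) by (simp add: square_integrable_noise_def square_integrable_noise_axioms_def)
  define c where "c e = \<theta> v* (G ** matrix_inv (mat 1 - B e) ** C e)" for e
  define y where "y u = label w (sol_map (B ep) (C ep) u)" for u
  define risk where "risk e = (\<integral>u. ell_LL (c e \<bullet> u) (y u) \<partial>Mu)" for e
  define X where "X e u = (c ep - c e) \<bullet> u" for e u
  have pred: "\<theta> \<bullet> (G *v sol_map (B e) (C e) u) = c e \<bullet> u" for e u
    unfolding c_def by (rule inner_sol_map)
  have y: "y \<in> borel_measurable Mu" "\<And>u. \<bar>y u\<bar> = 1"
    unfolding y_def by (simp_all add: borel_measurable_label_sol_map abs_label)
  have label: "label w (sol_map (B e) (C e) u) = y u" if "e \<in> Etr" for e u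
    unfolding y_def using label_invariant[OF assms(4,5) _ assms(10)] assms(6) that by blast
  have "risk ep \<le> (\<Sum>e\<in>Etr. P e * (risk e + (\<integral>u. \<bar>X e u\<bar> \<partial>Mu)))"
    using assms(8,9) integral_ell_LL_le[OF integrable_inner integrable_inner y]
    by (intro le_convex_combination) (simp_all add: risk_def X_def inner_diff_left)
  also have "\<dots> = (\<Sum>e\<in>Etr. P e * risk e) + (\<Sum>e\<in>Etr. P e * (\<integral>u. \<bar>X e u\<bar> \<partial>Mu))"
    by (simp add: distrib_left sum.distrib)
  also have "(\<Sum>e\<in>Etr. P e * (\<integral>u. \<bar>X e u\<bar> \<partial>Mu)) \<le> sqrt (\<Sum>e\<in>Etr. P e * (\<integral>u. (X e u)\<^sup>2 \<partial>Mu))"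
    using assms(8,9) integrable_inner integrable_inner_mult
    by (intro sum_integral_abs_le_sqrt) (simp_all add: X_def power2_eq_square)
  also have "(\<Sum>e\<in>Etr. P e * (\<integral>u. (X e u)\<^sup>2 \<partial>Mu)) = \<theta> \<bullet> (M_shift Mu Etr P G B C ep *v \<theta>)"
    using inner_M_shift[OF assms(7), of \<theta> P G B C ep] by (simp add: X_def pred inner_diff_left)
  also have "\<dots> \<le> lambda_max (M_shift Mu Etr P G B C ep) * (norm \<theta>)\<^sup>2"
    by (rule quadratic_form_le_lambda_max[OF M_shift_symmetric])
  finally show ?thesis
    by (simp add: risk_def label pred real_sqrt_mult mult.commute flip: y_def)
qed

end
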